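(* Let $s\in\frac12\mathbb{Z}_{>0}$, let $\mathcal{H}=\mathrm{span}\{|s,m\rangle\}_{m=-s}^{s}$ carry the spin-$s$ irreducible representation of $\mathbb{SU}(2)$, and let $\rho_{\mathrm{GHZ}}=|\mathrm{GHZ}\rangle\langle\mathrm{GHZ}|$ with $|\mathrm{GHZ}\rangle=\frac1{\sqrt2}(|s,s\rangle+|s,-s\rangle)$. Then for every $\alpha\in\{0,1,\dots,2s-1\}$: $\mathcal{P}_\alpha(\rho_{\mathrm{GHZ}})=\left(c^{s,s,\alpha}_{s,-s,0}\right)^2$ if $\alpha$ is even, and $\mathcal{P}_\alpha(\rho_{\mathrm{GHZ}})=0$ if $\alpha$ is odd.
   Context: Under the conjugation action $A\mapsto R(g)AR(g)^\dagger$, $\mathcal{L}(\mathcal{H})=\bigoplus_{\alpha=0}^{2s}\mathcal{L}_\alpha$ where $\mathcal{L}_\alpha$ is the unique invariant subspace carrying the spin-$\alpha$ irreducible representation. $c^{s_1,s_2,S}_{m_1,m_2,M}=\langle s_1,m_1;s_2,m_2|S,M\rangle$ denotes the Clebsch–Gordan coefficient. The GFD purity is $\mathcal{P}_\alpha(\rho)=\sum_\mu|\mathrm{Tr}[(B^\mu)^\dagger\rho]|^2$ for any Hilbert–Schmidt orthonormal basis $\{B^\mu\}$ of $\mathcal{L}_\alpha$. *)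

theory Defs
  imports Complex_Main
begin

text \<open>The spin is s = d/2 with d = 2s a positive natural number.
  The Hilbert space H = span{|s,m>} is modelled as C^(d+1), with basis index
  k in {0..d} corresponding to m = k - d/2 (so k = 0 is |s,-s>, k = d is |s,s>).
  Operators on H are functions nat => nat => complex, only the entries with
  indices in {0..d} being meaningful (we require them to vanish elsewhere).\<close>

type_synonym op = "nat \<Rightarrow> nat \<Rightarrow> complex"

definition is_op :: "nat \<Rightarrow> op \<Rightarrow> bool" where
  "is_op d A \<longleftrightarrow> (\<forall>i j. (d < i \<or> d < j) \<longrightarrow> A i j = 0)"

definition mmul :: "nat \<Rightarrow> op \<Rightarrow> op \<Rightarrow> op" where
  "mmul d A B = (\<lambda>i j. \<Sum>k\<le>d. A i k * B k j)"

definition comm :: "nat \<Rightarrow> op \<Rightarrow> op \<Rightarrow> op" where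
  "comm d A B = (\<lambda>i j. mmul d A B i j - mmul d B A i j)"

definition hs_inner :: "nat \<Rightarrow> op \<Rightarrow> op \<Rightarrow> complex" where
  "hs_inner d A B = (\<Sum>i\<le>d. \<Sum>j\<le>d. cnj (A i j) * B i j)"

text \<open>Spin-s angular momentum operators (standard Condon--Shortley convention).\<close>
definition mval :: "nat \<Rightarrow> nat \<Rightarrow> real" where
  "mval d k = real k - real d / 2"

definition Jz :: "nat \<Rightarrow> op" where
  "Jz d = (\<lambda>i j. if i = j \<and> i \<le> d then complex_of_real (mval d j) else 0)"

definition Jplus :: "nat \<Rightarrow> op" where
  "Jplus d = (\<lambda>i j. if j < d \<and> i = j + 1 then
      complex_of_real (sqrt ((real d / 2) * (real d / 2 + 1) - mval d j * (mval d j + 1)))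
      else 0)"

definition Jminus :: "nat \<Rightarrow> op" where
  "Jminus d = (\<lambda>i j. Jplus d j i)"

definition Jx :: "nat \<Rightarrow> op" where
  "Jx d = (\<lambda>i j. (Jplus d i j + Jminus d i j) / 2)"

definition Jy :: "nat \<Rightarrow> op" where
  "Jy d = (\<lambda>i j. (Jplus d i j - Jminus d i j) / (2 * \<i>))"

definition casimir_ad :: "nat \<Rightarrow> op \<Rightarrow> op" where
  "casimir_ad d A = (\<lambda>i j. comm d (Jx d) (comm d (Jx d) A) i j
                        + comm d (Jy d) (comm d (Jy d) A) i j
                        + comm d (Jz d) (comm d (Jz d) A) i j)"

text \<open>L_alpha: the spin-alpha component of L(H) under conjugation, i.e. the
  eigenspace of the adjoint Casimir with eigenvalue alpha(alpha+1).
  (Since L(H) is multiplicity free, this is the unique invariant subspace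
  carrying the spin-alpha irrep.)\<close>
definition Lsub :: "nat \<Rightarrow> nat \<Rightarrow> op set" where
  "Lsub d \<alpha> = {A. is_op d A \<and>
      casimir_ad d A = (\<lambda>i j. complex_of_real (real \<alpha> * (real \<alpha> + 1)) * A i j)}"

definition hs_onb :: "nat \<Rightarrow> op set \<Rightarrow> op list \<Rightarrow> bool" where
  "hs_onb d V Bs \<longleftrightarrow>
     set Bs \<subseteq> V \<and>
     (\<forall>\<mu><length Bs. \<forall>\<nu><length Bs.
        hs_inner d (Bs ! \<mu>) (Bs ! \<nu>) = (if \<mu> = \<nu> then 1 else 0)) \<and>
     (\<forall>A\<in>V. \<exists>c :: nat \<Rightarrow> complex.
        A = (\<lambda>i j. \<Sum>\<mu><length Bs. c \<mu> * (Bs ! \<mu>) i j))"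

definition gfd_sum :: "nat \<Rightarrow> op list \<Rightarrow> op \<Rightarrow> real" where
  "gfd_sum d Bs \<rho> = (\<Sum>\<mu><length Bs. (cmod (hs_inner d (Bs ! \<mu>) \<rho>))\<^sup>2)"

definition ghz :: "nat \<Rightarrow> nat \<Rightarrow> complex" where
  "ghz d k = (if k = 0 \<or> k = d then complex_of_real (1 / sqrt 2) else 0)"

definition rho_ghz :: "nat \<Rightarrow> op" where
  "rho_ghz d = (\<lambda>i j. ghz d i * cnj (ghz d j))"

text \<open>Clebsch--Gordan coefficients <j1,m1;j2,m2|J,M> via Racah's formula.
  All arguments are given DOUBLED (as integers), e.g. cg (2 j1) (2 j2) (2 J) (2 m1) (2 m2) (2 M).\<close>
definition hf :: "int \<Rightarrow> real" where
  "hf x = fact (nat (x div 2))"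

definition cg_valid :: "int \<Rightarrow> int \<Rightarrow> int \<Rightarrow> int \<Rightarrow> int \<Rightarrow> int \<Rightarrow> bool" where
  "cg_valid tj1 tj2 tJ tm1 tm2 tM \<longleftrightarrow>
     0 \<le> tj1 \<and> 0 \<le> tj2 \<and> 0 \<le> tJ \<and>
     \<bar>tm1\<bar> \<le> tj1 \<and> \<bar>tm2\<bar> \<le> tj2 \<and> \<bar>tM\<bar> \<le> tJ \<and>
     even (tj1 - tm1) \<and> even (tj2 - tm2) \<and> even (tJ - tM) \<and>
     \<bar>tj1 - tj2\<bar> \<le> tJ \<and> tJ \<le> tj1 + tj2 \<and> even (tj1 + tj2 + tJ) \<and>
     tM = tm1 + tm2"

definition cg :: "int \<Rightarrow> int \<Rightarrow> int \<Rightarrow> int \<Rightarrow> int \<Rightarrow> int \<Rightarrow> real" where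
  "cg tj1 tj2 tJ tm1 tm2 tM =
    (if cg_valid tj1 tj2 tJ tm1 tm2 tM then
       sqrt (real_of_int (tJ + 1) * hf (tJ + tj1 - tj2) * hf (tJ - tj1 + tj2) * hf (tj1 + tj2 - tJ)
             / hf (tj1 + tj2 + tJ + 2))
     * sqrt (hf (tJ + tM) * hf (tJ - tM) * hf (tj1 - tm1) * hf (tj1 + tm1)
             * hf (tj2 - tm2) * hf (tj2 + tm2))
     * (\<Sum>k\<in>{k::nat. 2 * int k \<le> tj1 + tj2 - tJ \<and> 2 * int k \<le> tj1 - tm1 \<and>
                       2 * int k \<le> tj2 + tm2 \<and> 0 \<le> tJ - tj2 + tm1 + 2 * int k \<and>
                       0 \<le> tJ - tj1 - tm2 + 2 * int k}.
          (-1) ^ k / (fact k * hf (tj1 + tj2 - tJ - 2 * int k) * hf (tj1 - tm1 - 2 * int k)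
                      * hf (tj2 + tm2 - 2 * int k) * hf (tJ - tj2 + tm1 + 2 * int k)
                      * hf (tJ - tj1 - tm2 + 2 * int k)))
     else 0)"

end

theory Submission
  imports Defs "HOL-Computational_Algebra.Formal_Power_Series"
begin

text \<open>
  The adjoint Casimir C(A) = sum_k [J_k, [J_k, A]] is self-adjoint for the Hilbert-Schmidt inner
  product, so L_alpha is its alpha(alpha+1)-eigenspace, different L_alpha are orthogonal, and by
  Parseval the GFD purity of rho is the squared norm of the orthogonal projection X of rho onto
  L_alpha, which equals <X, rho>.

  Split rho_GHZ into the corner part (|s,s><s,-s| + |s,-s><s,s|)/2 and the diagonal part
  diag(1/2, 0, ..., 0, 1/2). The corners are eigenvectors of C for the top spin 2s > alpha, so only
  the diagonal part is seen by L_alpha. On diagonal operators C acts as a three-term difference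
  operator whose eigenfunctions are the discrete Chebyshev polynomials Q_n (eigenvalue n(n+1)),
  normalised by Q_n(0) = 1 and satisfying Q_n(2s - k) = (-1)^n Q_n(k). With the weights
  w_n = (2n+1) (2s)!^2 / ((2s+n+1)! (2s-n)!) a telescoping binomial identity gives
  sum_n (-1)^n w_n Q_n = delta_(2s), hence by reflection sum_n w_n Q_n = delta_0, and so
  diag(1/2, 0, ..., 0, 1/2) = sum over even n of w_n diag(Q_n). Therefore X = [alpha even] w_alpha
  diag(Q_alpha) and the purity is <X, rho> = [alpha even] w_alpha. Racah's formula finally
  identifies w_alpha with the squared Clebsch-Gordan coefficient.
\<close>

section \<open>Ladder operators and the adjoint Casimir\<close>

lemma sum_atMost_single:
  fixes c d :: nat
  assumes "\<And>k. k \<le> d \<Longrightarrow> k \<noteq> c \<Longrightarrow> f k = 0"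
  shows "(\<Sum>k\<le>d. f k) = (if c \<le> d then f c else (0::'a::comm_monoid_add))"
proof -
  have "(\<Sum>k\<le>d. f k) = (\<Sum>k\<le>d. if k = c then f k else 0)"
    using assms by (intro sum.cong) auto
  also have "\<dots> = (if c \<le> d then f c else 0)"
    by simp
  finally show ?thesis .
qed

definition ladder_coeff :: "nat \<Rightarrow> nat \<Rightarrow> real" where
  "ladder_coeff d k = sqrt ((real d / 2) * (real d / 2 + 1) - mval d k * (mval d k + 1))"

lemma ladder_coeff_sq:
  assumes "k \<le> d"
  shows "ladder_coeff d k * ladder_coeff d k = real (d - k) * real (k + 1)"
proof -
  have "(real d / 2) * (real d / 2 + 1) - mval d k * (mval d k + 1) = real (d - k) * real (k + 1)"
    using assms by (simp add: mval_def field_simps)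
  then show ?thesis
    unfolding ladder_coeff_def by simp
qed

lemma Jplus_eq: "Jplus d i j = (if j < d \<and> i = j + 1 then complex_of_real (ladder_coeff d j) else 0)"
  by (simp add: Jplus_def ladder_coeff_def)

lemma mmul_Jplus_left:
  "mmul d (Jplus d) X i j = (if 1 \<le> i \<and> i \<le> d then of_real (ladder_coeff d (i - 1)) * X (i - 1) j else 0)"
  unfolding mmul_def by (subst sum_atMost_single[where c = "i - 1"]) (auto simp: Jplus_eq)

lemma mmul_Jplus_right:
  "mmul d X (Jplus d) i j = (if j < d then X i (j + 1) * of_real (ladder_coeff d j) else 0)"
  unfolding mmul_def by (subst sum_atMost_single[where c = "j + 1"]) (auto simp: Jplus_eq)

lemma mmul_Jminus_left:
  "mmul d (Jminus d) X i j = (if i < d then of_real (ladder_coeff d i) * X (i + 1) j else 0)"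
  unfolding mmul_def by (subst sum_atMost_single[where c = "i + 1"]) (auto simp: Jminus_def Jplus_eq)

lemma mmul_Jminus_right:
  "mmul d X (Jminus d) i j = (if 1 \<le> j \<and> j \<le> d then X i (j - 1) * of_real (ladder_coeff d (j - 1)) else 0)"
  unfolding mmul_def by (subst sum_atMost_single[where c = "j - 1"]) (auto simp: Jminus_def Jplus_eq)

lemma mmul_Jz_left: "mmul d (Jz d) X i j = (if i \<le> d then of_real (mval d i) * X i j else 0)"
  unfolding mmul_def by (subst sum_atMost_single[where c = i]) (auto simp: Jz_def)

lemma mmul_Jz_right: "mmul d X (Jz d) i j = (if j \<le> d then X i j * of_real (mval d j) else 0)"
  unfolding mmul_def by (subst sum_atMost_single[where c = j]) (auto simp: Jz_def)

lemma mmul_Jx_left: "mmul d (Jx d) X i j = (mmul d (Jplus d) X i j + mmul d (Jminus d) X i j) / 2"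
  unfolding mmul_def Jx_def by (simp add: sum_divide_distrib[symmetric] sum.distrib[symmetric] algebra_simps)

lemma mmul_Jx_right: "mmul d X (Jx d) i j = (mmul d X (Jplus d) i j + mmul d X (Jminus d) i j) / 2"
  unfolding mmul_def Jx_def by (simp add: sum_divide_distrib[symmetric] sum.distrib[symmetric] algebra_simps)

lemma mmul_Jy_left: "mmul d (Jy d) X i j = (mmul d (Jplus d) X i j - mmul d (Jminus d) X i j) / (2 * \<i>)"
  unfolding mmul_def Jy_def by (simp add: sum_divide_distrib[symmetric] sum_subtractf[symmetric] algebra_simps)

lemma mmul_Jy_right: "mmul d X (Jy d) i j = (mmul d X (Jplus d) i j - mmul d X (Jminus d) i j) / (2 * \<i>)"
  unfolding mmul_def Jy_def by (simp add: sum_divide_distrib[symmetric] sum_subtractf[symmetric] algebra_simps)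

lemmas mmul_ladder =
  mmul_Jplus_left mmul_Jplus_right mmul_Jminus_left mmul_Jminus_right mmul_Jz_left mmul_Jz_right

lemma comm_Jx: "comm d (Jx d) X i j = (comm d (Jplus d) X i j + comm d (Jminus d) X i j) / 2"
  unfolding comm_def mmul_Jx_left mmul_Jx_right by (simp add: field_simps)

lemma comm_Jy: "comm d (Jy d) X i j = (comm d (Jplus d) X i j - comm d (Jminus d) X i j) / (2 * \<i>)"
  unfolding comm_def mmul_Jy_left mmul_Jy_right by (simp add: field_simps)

lemma comm_lincomb:
  "comm d J (\<lambda>i j. a * P i j + b * Q i j) i j = a * comm d J P i j + b * comm d J Q i j"
  unfolding comm_def mmul_def by (simp add: sum.distrib sum_distrib_left algebra_simps)

lemma casimir_ad_ladder:
  "casimir_ad d A i j =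
     (comm d (Jplus d) (comm d (Jminus d) A) i j + comm d (Jminus d) (comm d (Jplus d) A) i j) / 2
     + comm d (Jz d) (comm d (Jz d) A) i j"
proof -
  have x: "comm d (Jx d) A = (\<lambda>i j. 1 / 2 * comm d (Jplus d) A i j + 1 / 2 * comm d (Jminus d) A i j)"
    by (intro ext) (simp add: comm_Jx)
  have y: "comm d (Jy d) A = (\<lambda>i j. 1 / (2 * \<i>) * comm d (Jplus d) A i j + (- 1 / (2 * \<i>)) * comm d (Jminus d) A i j)"
    by (intro ext) (simp add: comm_Jy field_simps)
  show ?thesis
    unfolding casimir_ad_def x y comm_Jx comm_Jy comm_lincomb by (simp add: field_simps)
qed

(* Expanding the double commutators with J^2 = s(s+1):
   C(A) = 2s(s+1) A - 2 J_z A J_z - J_+ A J_- - J_- A J_+. *)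
definition casimir_stencil :: "nat \<Rightarrow> op \<Rightarrow> op" where
  "casimir_stencil d A = (\<lambda>i j. if i \<le> d \<and> j \<le> d then
     of_real (real d * (real d + 2) / 2 - 2 * mval d i * mval d j) * A i j
     - (if 1 \<le> i \<and> 1 \<le> j then of_real (ladder_coeff d (i - 1) * ladder_coeff d (j - 1)) * A (i - 1) (j - 1) else 0)
     - (if i < d \<and> j < d then of_real (ladder_coeff d i * ladder_coeff d j) * A (i + 1) (j + 1) else 0)
   else 0)"

lemma ladder_coeff_sq_complex:
  "k \<le> d \<Longrightarrow> of_real (ladder_coeff d k) * of_real (ladder_coeff d k) = (of_nat (d - k) * of_nat (k + 1) :: complex)"
  by (metis ladder_coeff_sq of_real_mult of_real_of_nat_eq)

lemma ladder_coeff_sq_complex_mult: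
  "k \<le> d \<Longrightarrow> of_real (ladder_coeff d k) * (of_real (ladder_coeff d k) * z) = of_nat (d - k) * of_nat (k + 1) * (z :: complex)"
  by (metis ladder_coeff_sq_complex mult.assoc)

lemma index_cases:
  assumes "i \<le> d"
  obtains "i = 0" "d = 0" | "i = 0" "0 < d" | i' where "i = Suc i'" "Suc i' < d" | i' where "i = Suc i'" "d = Suc i'"
  using assms by (cases i; cases "i < d") auto

lemma casimir_ad_eq_stencil:
  assumes "is_op d A"
  shows "casimir_ad d A i j = casimir_stencil d A i j"
proof (cases "i \<le> d \<and> j \<le> d")
  case False
  have "A x y = 0" if "d < x \<or> d < y" for x y
    using assms that by (auto simp: is_op_def)
  with False show ?thesis
    by (auto simp: casimir_ad_ladder comm_def mmul_ladder casimir_stencil_def)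
next
  case True
  then have "i \<le> d" "j \<le> d"
    by auto
  then show ?thesis
    by (cases rule: index_cases; cases rule: index_cases[OF \<open>j \<le> d\<close>];
        simp add: casimir_ad_ladder comm_def mmul_ladder casimir_stencil_def;
        simp add: field_simps ladder_coeff_sq_complex ladder_coeff_sq_complex_mult mval_def)
qed

section \<open>Hilbert--Schmidt geometry\<close>

lemma hs_inner_add_left: "hs_inner d (\<lambda>i j. X i j + Y i j) B = hs_inner d X B + hs_inner d Y B"
  unfolding hs_inner_def by (simp add: algebra_simps sum.distrib)

lemma hs_inner_add_right: "hs_inner d A (\<lambda>i j. X i j + Y i j) = hs_inner d A X + hs_inner d A Y"
  unfolding hs_inner_def by (simp add: algebra_simps sum.distrib)

lemma hs_inner_diff_left: "hs_inner d (\<lambda>i j. X i j - Y i j) B = hs_inner d X B - hs_inner d Y B"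
  unfolding hs_inner_def by (simp add: algebra_simps sum_subtractf)

lemma hs_inner_diff_right: "hs_inner d A (\<lambda>i j. X i j - Y i j) = hs_inner d A X - hs_inner d A Y"
  unfolding hs_inner_def by (simp add: algebra_simps sum_subtractf)

lemma hs_inner_scale_left: "hs_inner d (\<lambda>i j. c * X i j) Y = cnj c * hs_inner d X Y"
  unfolding hs_inner_def by (simp add: sum_distrib_left algebra_simps)

lemma hs_inner_scale_right: "hs_inner d X (\<lambda>i j. c * Y i j) = c * hs_inner d X Y"
  unfolding hs_inner_def by (simp add: sum_distrib_left algebra_simps)

lemma hs_inner_sum_right:
  "hs_inner d A (\<lambda>i j. \<Sum>\<mu>\<in>S. c \<mu> * F \<mu> i j) = (\<Sum>\<mu>\<in>S. c \<mu> * hs_inner d A (F \<mu>))"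
  unfolding hs_inner_def by (simp add: sum_distrib_left mult_ac sum.swap[of _ S])

lemma hs_inner_sum_left:
  "hs_inner d (\<lambda>i j. \<Sum>\<mu>\<in>S. c \<mu> * F \<mu> i j) R = (\<Sum>\<mu>\<in>S. cnj (c \<mu>) * hs_inner d (F \<mu>) R)"
  unfolding hs_inner_def by (simp add: sum_distrib_left sum_distrib_right mult_ac sum.swap[of _ S])

definition hermitian :: "op \<Rightarrow> bool" where
  "hermitian J \<longleftrightarrow> (\<forall>i j. cnj (J j i) = J i j)"

lemma hermitian_Jz: "hermitian (Jz d)"
  by (auto simp: hermitian_def Jz_def)

lemma hermitian_Jx: "hermitian (Jx d)"
  by (auto simp: hermitian_def Jx_def Jminus_def Jplus_def)

lemma hermitian_Jy: "hermitian (Jy d)"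
  unfolding hermitian_def Jy_def Jminus_def by (auto simp: Jplus_def field_simps)

lemma hs_inner_mmul_left:
  assumes "hermitian J"
  shows "hs_inner d (mmul d J A) B = hs_inner d A (mmul d J B)"
proof -
  have "cnj (J i k) = J k i" for i k
    using assms by (auto simp: hermitian_def)
  then have "hs_inner d (mmul d J A) B = (\<Sum>i\<le>d. \<Sum>j\<le>d. \<Sum>k\<le>d. J k i * cnj (A k j) * B i j)"
    unfolding hs_inner_def mmul_def by (simp add: sum_distrib_right)
  also have "\<dots> = (\<Sum>i\<le>d. \<Sum>k\<le>d. \<Sum>j\<le>d. J k i * cnj (A k j) * B i j)"
    by (intro sum.cong refl sum.swap)
  also have "\<dots> = (\<Sum>k\<le>d. \<Sum>i\<le>d. \<Sum>j\<le>d. J k i * cnj (A k j) * B i j)"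
    by (rule sum.swap)
  also have "\<dots> = (\<Sum>k\<le>d. \<Sum>j\<le>d. \<Sum>i\<le>d. J k i * cnj (A k j) * B i j)"
    by (intro sum.cong refl sum.swap)
  also have "\<dots> = hs_inner d A (mmul d J B)"
    unfolding hs_inner_def mmul_def by (simp add: sum_distrib_left algebra_simps)
  finally show ?thesis .
qed

lemma hs_inner_mmul_right:
  assumes "hermitian J"
  shows "hs_inner d (mmul d A J) B = hs_inner d A (mmul d B J)"
proof -
  have "cnj (J i k) = J k i" for i k
    using assms by (auto simp: hermitian_def)
  then have "hs_inner d (mmul d A J) B = (\<Sum>i\<le>d. \<Sum>j\<le>d. \<Sum>k\<le>d. cnj (A i k) * J j k * B i j)"
    unfolding hs_inner_def mmul_def by (simp add: sum_distrib_right)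
  also have "\<dots> = (\<Sum>i\<le>d. \<Sum>k\<le>d. \<Sum>j\<le>d. cnj (A i k) * J j k * B i j)"
    by (intro sum.cong refl sum.swap)
  also have "\<dots> = hs_inner d A (mmul d B J)"
    unfolding hs_inner_def mmul_def by (simp add: sum_distrib_left algebra_simps)
  finally show ?thesis .
qed

lemma hs_inner_comm:
  assumes "hermitian J"
  shows "hs_inner d (comm d J A) B = hs_inner d A (comm d J B)"
  unfolding comm_def hs_inner_diff_left hs_inner_diff_right
  using hs_inner_mmul_left[OF assms] hs_inner_mmul_right[OF assms] by simp

lemma hs_inner_casimir_ad: "hs_inner d (casimir_ad d A) B = hs_inner d A (casimir_ad d B)"
proof -
  \<comment> \<open>The nested pointwise sums are the shape hs_inner_add_left/right rewrite.\<close>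
  have "casimir_ad d X = (\<lambda>i j. (\<lambda>i j. comm d (Jx d) (comm d (Jx d) X) i j
      + comm d (Jy d) (comm d (Jy d) X) i j) i j + comm d (Jz d) (comm d (Jz d) X) i j)" for X
    by (simp add: casimir_ad_def)
  then show ?thesis
    by (simp only: hs_inner_add_left hs_inner_add_right hs_inner_comm hermitian_Jx hermitian_Jy hermitian_Jz)
qed

lemma hs_inner_casimir_eigen_orthogonal:
  assumes "casimir_ad d A = (\<lambda>i j. complex_of_real a * A i j)"
    and "casimir_ad d B = (\<lambda>i j. complex_of_real b * B i j)"
    and "a \<noteq> b"
  shows "hs_inner d A B = 0"
proof -
  have "complex_of_real a * hs_inner d A B = complex_of_real b * hs_inner d A B"
    using hs_inner_casimir_ad[of d A B] unfolding assms(1,2) hs_inner_scale_left hs_inner_scale_right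
    by simp
  with assms(3) show ?thesis
    by simp
qed

lemma strict_mono_pronic: "strict_mono (\<lambda>n::nat. real n * (real n + 1))"
  by (rule strict_monoI) (simp add: mult_strict_mono)

lemma hs_inner_Lsub_orthogonal:
  assumes "A \<in> Lsub d \<alpha>" "B \<in> Lsub d \<beta>" "\<alpha> \<noteq> \<beta>"
  shows "hs_inner d A B = 0"
proof (rule hs_inner_casimir_eigen_orthogonal)
  show "real \<alpha> * (real \<alpha> + 1) \<noteq> real \<beta> * (real \<beta> + 1)"
    using assms(3) strict_mono_eq[OF strict_mono_pronic, of \<alpha> \<beta>] by simp
qed (use assms(1,2) in \<open>auto simp: Lsub_def\<close>)

lemma gfd_sum_eq_hs_norm:
  assumes onb: "hs_onb d V Bs" and X: "X \<in> V"
    and R: "\<And>B. B \<in> V \<Longrightarrow> hs_inner d B R = hs_inner d B X"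
  shows "complex_of_real (gfd_sum d Bs R) = hs_inner d X X"
proof -
  let ?n = "length Bs"
  have orthonormal: "\<And>\<mu> \<nu>. \<mu> < ?n \<Longrightarrow> \<nu> < ?n \<Longrightarrow> hs_inner d (Bs ! \<mu>) (Bs ! \<nu>) = (if \<mu> = \<nu> then 1 else 0)"
    using onb unfolding hs_onb_def by auto
  obtain c where Xc: "X = (\<lambda>i j. \<Sum>\<mu><?n. c \<mu> * (Bs ! \<mu>) i j)"
    using onb X unfolding hs_onb_def by blast
  have coeff: "hs_inner d (Bs ! \<mu>) X = c \<mu>" if "\<mu> < ?n" for \<mu>
  proof -
    have "hs_inner d (Bs ! \<mu>) X = (\<Sum>\<nu><?n. c \<nu> * hs_inner d (Bs ! \<mu>) (Bs ! \<nu>))"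
      by (subst Xc) (rule hs_inner_sum_right)
    also have "\<dots> = (\<Sum>\<nu><?n. if \<nu> = \<mu> then c \<mu> else 0)"
      using that orthonormal by (intro sum.cong) auto
    finally show ?thesis
      using that by simp
  qed
  have "Bs ! \<mu> \<in> V" if "\<mu> < ?n" for \<mu>
    using onb that unfolding hs_onb_def by auto
  then have "gfd_sum d Bs R = (\<Sum>\<mu><?n. (cmod (c \<mu>))\<^sup>2)"
    unfolding gfd_sum_def by (intro sum.cong) (simp_all add: R coeff)
  also have "complex_of_real \<dots> = (\<Sum>\<mu><?n. cnj (c \<mu>) * hs_inner d (Bs ! \<mu>) X)"
    unfolding of_real_sum by (intro sum.cong) (simp_all add: coeff complex_norm_square mult.commute del: of_real_power)
  also have "\<dots> = hs_inner d X X"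
    by (subst (2) Xc) (rule hs_inner_sum_left[symmetric])
  finally show ?thesis .
qed

section \<open>Diagonal operators and discrete Chebyshev polynomials\<close>

definition diag_op :: "nat \<Rightarrow> (nat \<Rightarrow> real) \<Rightarrow> op" where
  "diag_op d f = (\<lambda>i j. if i = j \<and> i \<le> d then complex_of_real (f i) else 0)"

(* The coefficient of f (k - 1) vanishes at k = 0 and that of f (k + 1) at k = d, so the truncated
   index k - 1 and the out-of-range index d + 1 never contribute. *)
definition diag_casimir :: "nat \<Rightarrow> (nat \<Rightarrow> real) \<Rightarrow> nat \<Rightarrow> real" where
  "diag_casimir d f k = real (d - k) * real (k + 1) * (f k - f (k + 1)) + real k * real (d + 1 - k) * (f k - f (k - 1))"

lemma is_op_diag_op: "is_op d (diag_op d f)"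
  by (auto simp: is_op_def diag_op_def)

lemma hs_inner_diag_op_right: "hs_inner d B (diag_op d f) = (\<Sum>k\<le>d. cnj (B k k) * complex_of_real (f k))"
  unfolding hs_inner_def diag_op_def
  by (intro sum.cong refl, subst sum_atMost_single[where c = k for k]) auto

lemma hs_inner_diag_op_left: "hs_inner d (diag_op d f) R = (\<Sum>k\<le>d. complex_of_real (f k) * R k k)"
  unfolding hs_inner_def diag_op_def
  by (intro sum.cong refl, subst sum_atMost_single[where c = k for k]) auto

lemma casimir_ad_diag_op: "casimir_ad d (diag_op d f) = diag_op d (diag_casimir d f)"
proof (intro ext)
  fix i j
  have "casimir_stencil d (diag_op d f) i j = diag_op d (diag_casimir d f) i j"
  proof (cases "i = j \<and> i \<le> d")
    case True
    then have id: "i \<le> d" by simp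
    have "casimir_stencil d (diag_op d f) i i = of_real ((real d * (real d + 2) / 2 - 2 * mval d i * mval d i) * f i
        - (if 1 \<le> i then ladder_coeff d (i - 1) * ladder_coeff d (i - 1) * f (i - 1) else 0)
        - (if i < d then ladder_coeff d i * ladder_coeff d i * f (i + 1) else 0))"
      using True by (auto simp: casimir_stencil_def diag_op_def)
    also have "\<dots> = of_real (diag_casimir d f i)"
    proof -
      have w: "real d * (real d + 2) / 2 - 2 * mval d i * mval d i = real (d - i) * real (i + 1) + real i * real (d + 1 - i)"
        using id by (simp add: mval_def of_nat_diff field_simps)
      show ?thesis
        unfolding of_real_eq_iff w using id
        by (cases i; cases "i < d") (simp_all add: ladder_coeff_sq diag_casimir_def of_nat_diff algebra_simps)
    qed
    finally show ?thesis
      using True by (simp add: diag_op_def)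
  qed (auto simp: casimir_stencil_def diag_op_def)
  then show "casimir_ad d (diag_op d f) i j = diag_op d (diag_casimir d f) i j"
    by (simp add: casimir_ad_eq_stencil is_op_diag_op)
qed

lemma diag_op_in_Lsub:
  assumes "\<And>k. k \<le> d \<Longrightarrow> diag_casimir d f k = real \<alpha> * (real \<alpha> + 1) * f k"
  shows "diag_op d f \<in> Lsub d \<alpha>"
proof -
  have "diag_op d (diag_casimir d f) = (\<lambda>i j. of_real (real \<alpha> * (real \<alpha> + 1)) * diag_op d f i j)"
    by (intro ext) (simp add: diag_op_def assms)
  then show ?thesis
    by (simp add: Lsub_def is_op_diag_op casimir_ad_diag_op)
qed

lemma diag_casimir_scale: "diag_casimir d (\<lambda>k. c * f k) k = c * diag_casimir d f k"
  unfolding diag_casimir_def by (simp add: algebra_simps)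

lemma diag_casimir_sum:
  "diag_casimir d (\<lambda>k. \<Sum>j\<in>J. c j * f j k) k = (\<Sum>j\<in>J. c j * diag_casimir d (f j) k)"
  unfolding diag_casimir_def
  by (simp add: sum_distrib_left sum.distrib[symmetric] sum_subtractf[symmetric] algebra_simps)

lemma of_nat_Suc_mult_binomial_Suc:
  "real (Suc k) * real (n choose Suc k) = (real n - real k) * real (n choose k)"
proof (cases "k \<le> n")
  case True
  have "Suc k * (n choose Suc k) = (n - k) * (n choose k)"
    by (metis binomial_absorption binomial_absorb_comp)
  then have "real (Suc k * (n choose Suc k)) = real ((n - k) * (n choose k))"
    by (simp only:)
  then show ?thesis
    using True by (simp add: of_nat_diff algebra_simps)
qed (simp add: binomial_eq_0)

lemma diag_casimir_binomial:
  assumes "k \<le> d"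
  shows "diag_casimir d (\<lambda>k. real (k choose j)) k =
     real j * real (j + 1) * real (k choose j) - real j * (real d + 1 - real j) * real (k choose (j - 1))"
proof (cases j)
  case 0
  then show ?thesis
    by (simp add: diag_casimir_def)
next
  case (Suc i)
  show ?thesis
  proof (cases k)
    case 0
    then show ?thesis
      using Suc assms by (cases i) (simp_all add: diag_casimir_def)
  next
    case (Suc k')
    have p1: "real (Suc k choose Suc i) = real (k choose Suc i) + real (k choose i)"
      by simp
    have p2: "real (k choose Suc i) = real (k' choose Suc i) + real (k' choose i)"
      using Suc by simp
    have s1: "real (Suc k) * real (k choose i) = real (Suc i) * real (Suc k choose Suc i)"
      using Suc_times_binomial_eq[of k i] by (metis mult.commute of_nat_mult)
    have s2: "real k * real (k' choose i) = real (Suc i) * real (k choose Suc i)"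
      using Suc_times_binomial_eq[of k' i] Suc by (metis mult.commute of_nat_mult)
    have s3: "(real k - real i) * real (k choose i) = real (Suc i) * real (k choose Suc i)"
      using of_nat_Suc_mult_binomial_Suc[of i k] by simp
    have dk: "real (d - k) = real d - real k" "real (d + 1 - k) = real d + 1 - real k"
      using assms by (simp_all add: of_nat_diff)
    have "diag_casimir d (\<lambda>k. real (k choose Suc i)) k =
        - (real d - real k) * (real (k + 1) * real (k choose i)) + (real d + 1 - real k) * (real k * real (k' choose i))"
      unfolding diag_casimir_def dk using Suc p1 p2 by (simp add: algebra_simps)
    also have "\<dots> = - (real d - real k) * (real (Suc i) * (real (k choose Suc i) + real (k choose i)))
         + (real d + 1 - real k) * (real (Suc i) * real (k choose Suc i))"
      using s1 s2 p1 by simp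
    also have "\<dots> = real (Suc i) * real (Suc (Suc i)) * real (k choose Suc i)
         - real (Suc i) * (real d - real i) * real (k choose i)"
      using s3 by (simp add: algebra_simps)
    finally show ?thesis
      using \<open>j = Suc i\<close> by (simp add: algebra_simps)
  qed
qed

(* Q_n(k) = 3F2(-n, n+1, -k; 1, -d; 1), the Hahn polynomials with parameters 0, 0, d. *)
definition dchebyshev_coeff :: "nat \<Rightarrow> nat \<Rightarrow> nat \<Rightarrow> real" where
  "dchebyshev_coeff d n j = (-1) ^ j * real (n choose j) * real ((n + j) choose j) / real (d choose j)"

definition dchebyshev :: "nat \<Rightarrow> nat \<Rightarrow> nat \<Rightarrow> real" where
  "dchebyshev d n k = (\<Sum>j\<le>n. dchebyshev_coeff d n j * real (k choose j))"

lemma dchebyshev_coeff_Suc: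
  assumes "i < n" "n \<le> d"
  shows "dchebyshev_coeff d n (Suc i) * real (Suc i) * (real d - real i)
    = - dchebyshev_coeff d n i * (real n - real i) * (real n + real i + 1)"
proof -
  have e1: "real (Suc i) * real (n choose Suc i) = (real n - real i) * real (n choose i)"
    by (rule of_nat_Suc_mult_binomial_Suc)
  have e2: "real (Suc i) * real (d choose Suc i) = (real d - real i) * real (d choose i)"
    by (rule of_nat_Suc_mult_binomial_Suc)
  have e3: "real (Suc i) * real (Suc (n + i) choose Suc i) = (real n + real i + 1) * real ((n + i) choose i)"
  proof -
    have "real (Suc i * (Suc (n + i) choose Suc i)) = real (Suc (n + i) * ((n + i) choose i))"
      by (simp only: Suc_times_binomial)
    then show ?thesis
      by (simp add: algebra_simps)
  qed
  have pos: "real (d choose i) > 0" "real (d choose Suc i) > 0"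
    using assms by auto
  have "dchebyshev_coeff d n (Suc i) * real (Suc i) * (real d - real i) * real (d choose Suc i) * real (Suc i)
      = - ((-1) ^ i) * (real (Suc i) * real (n choose Suc i)) * (real (Suc i) * real (Suc (n + i) choose Suc i)) * (real d - real i)"
    unfolding dchebyshev_coeff_def using pos by (simp add: field_simps)
  also have "\<dots> = - ((-1) ^ i) * ((real n - real i) * real (n choose i)) * ((real n + real i + 1) * real ((n + i) choose i)) * (real d - real i)"
    unfolding e1 e3 ..
  also have "\<dots> = - dchebyshev_coeff d n i * (real n - real i) * (real n + real i + 1) * (real (Suc i) * real (d choose Suc i))"
    unfolding e2 dchebyshev_coeff_def using pos by (simp add: field_simps)
  finally have "(dchebyshev_coeff d n (Suc i) * real (Suc i) * (real d - real i)) * (real (d choose Suc i) * real (Suc i))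
     = (- dchebyshev_coeff d n i * (real n - real i) * (real n + real i + 1)) * (real (d choose Suc i) * real (Suc i))"
    by (simp only: mult.assoc mult.commute mult.left_commute)
  then show ?thesis
    using pos by (simp only: mult_cancel_right) simp
qed

lemma diag_casimir_dchebyshev:
  assumes "k \<le> d" "n \<le> d"
  shows "diag_casimir d (dchebyshev d n) k = real n * (real n + 1) * dchebyshev d n k"
proof -
  let ?c = "dchebyshev_coeff d n"
  have "diag_casimir d (dchebyshev d n) k = (\<Sum>j\<le>n. ?c j * diag_casimir d (\<lambda>k. real (k choose j)) k)"
    unfolding dchebyshev_def[abs_def] by (rule diag_casimir_sum)
  also have "\<dots> = (\<Sum>j\<le>n. ?c j * (real j * real (j + 1)) * real (k choose j))
       - (\<Sum>j\<le>n. ?c j * real j * (real d + 1 - real j) * real (k choose (j - 1)))"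
    using assms by (simp add: diag_casimir_binomial sum_subtractf[symmetric] algebra_simps)
  also have "(\<Sum>j\<le>n. ?c j * real j * (real d + 1 - real j) * real (k choose (j - 1)))
      = (\<Sum>i<n. ?c (Suc i) * real (Suc i) * (real d - real i) * real (k choose i))"
    unfolding lessThan_Suc_atMost[symmetric] sum.lessThan_Suc_shift by simp
  also have "\<dots> = (\<Sum>i<n. - ?c i * (real n - real i) * (real n + real i + 1) * real (k choose i))"
    using assms by (intro sum.cong refl, subst dchebyshev_coeff_Suc) auto
  also have "\<dots> = (\<Sum>i\<le>n. - ?c i * (real n - real i) * (real n + real i + 1) * real (k choose i))"
    by (simp add: lessThan_Suc_atMost[symmetric])
  finally have "diag_casimir d (dchebyshev d n) k = (\<Sum>j\<le>n. ?c j * (real j * real (j + 1)) * real (k choose j)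
      + ?c j * (real n - real j) * (real n + real j + 1) * real (k choose j))"
    by (simp add: sum.distrib sum_negf)
  also have "\<dots> = (\<Sum>j\<le>n. real n * (real n + 1) * (?c j * real (k choose j)))"
    by (intro sum.cong refl) (simp add: algebra_simps)
  finally show ?thesis
    unfolding dchebyshev_def by (simp add: sum_distrib_left)
qed

(* Chu-Vandermonde, after writing (-1)^j ((n+j) choose j) as (-(n+1)) gchoose j. *)
lemma sum_alternating_binomial_binomial:
  "(\<Sum>j\<le>n. (-1) ^ j * real (n choose j) * real ((n + j) choose j)) = (-1) ^ n"
proof -
  have "(\<Sum>j\<le>n. (-1) ^ j * real (n choose j) * real ((n + j) choose j))
      = (\<Sum>j\<le>n. ((- (real n + 1)) gchoose j) * (real n gchoose (n - j)))"
  proof (intro sum.cong refl)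
    fix j assume "j \<in> {..n}"
    have "(- (real n + 1)) gchoose j = (-1) ^ j * ((real n + 1 + real j - 1) gchoose j)"
      by (rule gbinomial_minus)
    also have "real n + 1 + real j - 1 = real (n + j)"
      by simp
    finally have "(- (real n + 1)) gchoose j = (-1) ^ j * real ((n + j) choose j)"
      by (simp only: binomial_gbinomial)
    moreover have "real n gchoose (n - j) = real (n choose j)"
      using \<open>j \<in> {..n}\<close> by (simp add: binomial_gbinomial[symmetric] binomial_symmetric[symmetric])
    ultimately show "(-1) ^ j * real (n choose j) * real ((n + j) choose j)
        = ((- (real n + 1)) gchoose j) * (real n gchoose (n - j))"
      by simp
  qed
  also have "\<dots> = (- (real n + 1) + real n) gchoose n"
    using gbinomial_Vandermonde[of "- (real n + 1)" "real n" n] by (simp add: atLeast0AtMost)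
  also have "\<dots> = (-1) ^ n"
    using gbinomial_minus[of "1::real" n] by (simp add: binomial_gbinomial[symmetric])
  finally show ?thesis .
qed

lemma dchebyshev_at_0: "dchebyshev d n 0 = 1"
proof -
  have "dchebyshev d n 0 = (\<Sum>j\<le>n. if j = 0 then dchebyshev_coeff d n 0 else 0)"
    unfolding dchebyshev_def by (intro sum.cong) auto
  then show ?thesis
    by (simp add: dchebyshev_coeff_def)
qed

lemma dchebyshev_at_top:
  assumes "n \<le> d"
  shows "dchebyshev d n d = (-1) ^ n"
proof -
  have "dchebyshev d n d = (\<Sum>j\<le>n. (-1) ^ j * real (n choose j) * real ((n + j) choose j))"
    unfolding dchebyshev_def dchebyshev_coeff_def using assms by (intro sum.cong) auto
  then show ?thesis
    by (simp add: sum_alternating_binomial_binomial)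
qed

lemma diag_casimir_eigen_vanishes:
  assumes eigen: "\<And>k. k < d \<Longrightarrow> diag_casimir d f k = \<mu> * f k" and "f 0 = 0" and "k \<le> d"
  shows "f k = 0"
proof -
  have "f k = 0 \<and> f (Suc k) = 0" if "Suc k \<le> d" for k
    using that
  proof (induction k)
    case 0
    then show ?case
      using eigen[of 0] \<open>f 0 = 0\<close> by (simp add: diag_casimir_def)
  next
    case (Suc k)
    then have "f k = 0" "f (Suc k) = 0"
      by auto
    moreover have "real (d - Suc k) * real (Suc k + 1) \<noteq> 0"
      using Suc.prems by simp
    ultimately show ?case
      using eigen[of "Suc k"] Suc.prems by (simp add: diag_casimir_def)
  qed
  then show ?thesis
    using \<open>f 0 = 0\<close> \<open>k \<le> d\<close> by (cases k) auto
qed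

lemma diag_casimir_reflect:
  assumes "k \<le> d"
  shows "diag_casimir d (\<lambda>k. f (d - k)) k = diag_casimir d f (d - k)"
proof -
  consider "k = 0" | "k = d" "0 < d" | "0 < k" "k < d"
    using assms by linarith
  then show ?thesis
  proof cases
    case 1
    then show ?thesis
      by (cases d) (simp_all add: diag_casimir_def algebra_simps)
  next
    case 2
    then show ?thesis
      by (simp add: diag_casimir_def algebra_simps)
  next
    case 3
    then have "d - (k + 1) = d - k - 1" "d - (k - 1) = d - k + 1"
      by auto
    with 3 show ?thesis
      unfolding diag_casimir_def by (simp add: of_nat_diff algebra_simps)
  qed
qed

lemma dchebyshev_reflect:
  assumes "n \<le> d" "k \<le> d"
  shows "dchebyshev d n (d - k) = (-1) ^ n * dchebyshev d n k"
proof -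
  define g where "g k = dchebyshev d n (d - k) - (-1) ^ n * dchebyshev d n k" for k
  have "g k = 0"
  proof (rule diag_casimir_eigen_vanishes[where \<mu> = "real n * (real n + 1)"])
    fix k assume "k < d"
    have "diag_casimir d g k = diag_casimir d (\<lambda>k. dchebyshev d n (d - k)) k
        - (-1) ^ n * diag_casimir d (dchebyshev d n) k"
      unfolding g_def diag_casimir_def by (simp add: algebra_simps)
    also have "\<dots> = real n * (real n + 1) * g k"
      using \<open>k < d\<close> assms by (simp add: diag_casimir_reflect diag_casimir_dchebyshev g_def algebra_simps)
    finally show "diag_casimir d g k = real n * (real n + 1) * g k" .
  qed (use assms in \<open>simp_all add: g_def dchebyshev_at_0 dchebyshev_at_top\<close>)
  then show ?thesis
    by (simp add: g_def)
qed

section \<open>Completeness of the discrete Chebyshev polynomials\<close>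

(* The Christoffel numbers 1 / (sum_k Q_n(k)^2). *)
definition dchebyshev_weight :: "nat \<Rightarrow> nat \<Rightarrow> real" where
  "dchebyshev_weight d n = (2 * real n + 1) * (fact d)\<^sup>2 / (fact (d + n + 1) * fact (d - n))"

definition weight_base :: "nat \<Rightarrow> nat \<Rightarrow> nat \<Rightarrow> real" where
  "weight_base d j n = (fact d)\<^sup>2 * fact (n + j)
     / ((fact j)\<^sup>2 * real (d - j) * fact (n - j) * fact (d + n + 1) * fact (d - n))"

(* For j < d these g_n satisfy w_n (n choose j) ((n+j) choose j) = g_n + g_(n-1), because
   (n+j+1)(d-n) + (n-j)(d+n+1) = (2n+1)(d-j); so the alternating sum over n telescopes. *)
definition weight_telescope_term :: "nat \<Rightarrow> nat \<Rightarrow> nat \<Rightarrow> real" where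
  "weight_telescope_term d j n = (if j \<le> n then weight_base d j n * (real (n + j + 1) * real (d - n)) else 0)"

lemma binomial_mult_binomial_add:
  "j \<le> n \<Longrightarrow> real (n choose j) * real ((n + j) choose j) = fact (n + j) / ((fact j)\<^sup>2 * fact (n - j))"
  by (simp add: binomial_fact power2_eq_square field_simps)

lemma weight_binomials_eq_base:
  assumes "j \<le> n" "j < d"
  shows "dchebyshev_weight d n * real (n choose j) * real ((n + j) choose j)
    = weight_base d j n * ((2 * real n + 1) * real (d - j))"
proof -
  define r where "r = real (d - j)"
  have "r \<noteq> 0"
    using assms(2) by (simp add: r_def)
  then show ?thesis
    unfolding dchebyshev_weight_def weight_base_def mult.assoc binomial_mult_binomial_add[OF assms(1)]
      r_def[symmetric]
    by (simp add: field_simps del: fact_Suc)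
qed

lemma weight_base_Suc:
  assumes "j \<le> m" "Suc m \<le> d"
  shows "weight_base d j m * (real (Suc m + j) * real (d - m))
    = weight_base d j (Suc m) * (real (Suc m - j) * real (d + Suc m + 1))"
proof -
  define r1 where "r1 = real (d - j)"
  define r2 where "r2 = real (d - m)"
  define r3 where "r3 = real (Suc m - j)"
  define r4 where "r4 = real (d + Suc m + 1)"
  have "fact (Suc m + j) = real (Suc m + j) * (fact (m + j) :: real)"
    by simp
  moreover have "fact (Suc m - j) = r3 * (fact (m - j) :: real)"
    using assms(1) by (simp add: r3_def Suc_diff_le)
  moreover have "fact (d + Suc m + 1) = r4 * (fact (d + m + 1) :: real)"
    by (simp add: r4_def)
  moreover have "fact (d - m) = r2 * (fact (d - Suc m) :: real)"
    using assms(2) by (simp add: r2_def fact_reduce)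
  moreover have "r1 \<noteq> 0" "r2 \<noteq> 0" "r3 \<noteq> 0" "r4 \<noteq> 0"
    using assms by (auto simp: r1_def r2_def r3_def r4_def)
  ultimately show ?thesis
    unfolding weight_base_def r1_def[symmetric] r2_def[symmetric] r3_def[symmetric] r4_def[symmetric]
    by (simp add: field_simps del: fact_Suc)
qed

lemma weight_binomials_telescope:
  assumes "j < d" "n \<le> d"
  shows "dchebyshev_weight d n * real (n choose j) * real ((n + j) choose j)
    = weight_telescope_term d j n + (if n = 0 then 0 else weight_telescope_term d j (n - 1))"
proof -
  consider "n < j" | "n = j" | m where "j \<le> m" "n = Suc m"
    by (metis less_Suc_eq_le linorder_neqE_nat not0_implies_Suc not_less_zero)
  then show ?thesis
  proof cases
    case 1
    then show ?thesis
      by (auto simp: weight_telescope_term_def binomial_eq_0)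
  next
    case 2
    then have "weight_telescope_term d j n + (if n = 0 then 0 else weight_telescope_term d j (n - 1))
        = weight_base d j n * ((2 * real n + 1) * real (d - j))"
      by (cases n) (auto simp: weight_telescope_term_def)
    then show ?thesis
      using 2 assms weight_binomials_eq_base[of j n d] by simp
  next
    case 3
    then have "weight_telescope_term d j n + weight_telescope_term d j (n - 1)
        = weight_base d j n * (real (n + j + 1) * real (d - n) + real (n - j) * real (d + n + 1))"
      using assms weight_base_Suc[of j m d] by (simp add: weight_telescope_term_def distrib_left)
    also have "\<dots> = weight_base d j n * ((2 * real n + 1) * real (d - j))"
      using 3 assms by (simp add: of_nat_diff algebra_simps)
    finally show ?thesis
      using 3 assms weight_binomials_eq_base[of j n d] by simp
  qed
qed

lemma sum_atMost_telescope_pred: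
  fixes v :: "nat \<Rightarrow> real"
  shows "(\<Sum>n\<le>N. v n - (if n = 0 then 0 else v (n - 1))) = v N"
  by (induction N) simp_all

lemma dchebyshev_weight_top: "dchebyshev_weight d d * real ((d + d) choose d) = 1"
proof -
  have "fact (d + d + 1) = (2 * real d + 1) * (fact (d + d) :: real)"
    by simp
  then have "dchebyshev_weight d d = (2 * real d + 1) * (fact d * fact d) / ((2 * real d + 1) * fact (d + d))"
    unfolding dchebyshev_weight_def by (simp only: power2_eq_square diff_self_eq_0 fact_0 mult_1_right)
  also have "\<dots> = (fact d * fact d) / fact (d + d)"
    by (rule mult_divide_mult_cancel_left) simp
  finally show ?thesis
    by (simp add: binomial_fact)
qed

lemma sum_weight_dchebyshev_coeff:
  assumes "j \<le> d"
  shows "(\<Sum>n\<le>d. (-1) ^ n * dchebyshev_weight d n * dchebyshev_coeff d n j) = (if j = d then 1 else 0)"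
proof -
  let ?w = "dchebyshev_weight d"
  have "(\<Sum>n\<le>d. (-1) ^ n * ?w n * dchebyshev_coeff d n j) = (-1) ^ j / real (d choose j) *
      (\<Sum>n\<le>d. (-1) ^ n * ?w n * real (n choose j) * real ((n + j) choose j))"
    unfolding dchebyshev_coeff_def sum_distrib_left by (intro sum.cong refl) (simp add: field_simps)
  also have "(\<Sum>n\<le>d. (-1) ^ n * ?w n * real (n choose j) * real ((n + j) choose j)) = (if j = d then (-1) ^ d else 0)"
  proof (cases "j = d")
    case True
    have "(\<Sum>n\<le>d. (-1) ^ n * ?w n * real (n choose d) * real ((n + d) choose d))
        = (\<Sum>n\<le>d. if n = d then (-1) ^ d * (?w d * real ((d + d) choose d)) else 0)"
      by (intro sum.cong refl) auto
    then show ?thesis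
      using True dchebyshev_weight_top by simp
  next
    case False
    define v where "v n = (-1) ^ n * weight_telescope_term d j n" for n
    have "(\<Sum>n\<le>d. (-1) ^ n * ?w n * real (n choose j) * real ((n + j) choose j))
        = (\<Sum>n\<le>d. v n - (if n = 0 then 0 else v (n - 1)))"
    proof (intro sum.cong refl)
      fix n assume "n \<in> {..d}"
      then have "(-1) ^ n * ?w n * real (n choose j) * real ((n + j) choose j)
          = (-1) ^ n * (weight_telescope_term d j n + (if n = 0 then 0 else weight_telescope_term d j (n - 1)))"
        using weight_binomials_telescope[of j d n] False assms by (simp add: mult.assoc)
      also have "\<dots> = v n - (if n = 0 then 0 else v (n - 1))"
        by (cases n) (simp_all add: v_def algebra_simps)
      finally show "(-1) ^ n * ?w n * real (n choose j) * real ((n + j) choose j) = v n - (if n = 0 then 0 else v (n - 1))" .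
    qed
    also have "\<dots> = v d"
      by (rule sum_atMost_telescope_pred)
    finally show ?thesis
      using False by (simp add: v_def weight_telescope_term_def)
  qed
  finally show ?thesis
    by (simp add: power_add[symmetric])
qed

lemma sum_alternating_weight_dchebyshev:
  assumes "k \<le> d"
  shows "(\<Sum>n\<le>d. (-1) ^ n * dchebyshev_weight d n * dchebyshev d n k) = (if k = d then 1 else 0)"
proof -
  let ?w = "dchebyshev_weight d" and ?c = "dchebyshev_coeff d"
  have "dchebyshev d n k = (\<Sum>j\<le>d. ?c n j * real (k choose j))" if "n \<le> d" for n
    unfolding dchebyshev_def using that
    by (intro sum.mono_neutral_left) (auto simp: dchebyshev_coeff_def)
  then have "(\<Sum>n\<le>d. (-1) ^ n * ?w n * dchebyshev d n k) = (\<Sum>n\<le>d. \<Sum>j\<le>d. (-1) ^ n * ?w n * ?c n j * real (k choose j))"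
    by (intro sum.cong refl) (simp add: sum_distrib_left mult.assoc)
  also have "\<dots> = (\<Sum>j\<le>d. (\<Sum>n\<le>d. (-1) ^ n * ?w n * ?c n j) * real (k choose j))"
    by (subst sum.swap) (simp add: sum_distrib_right)
  also have "\<dots> = (\<Sum>j\<le>d. if j = d then real (k choose j) else 0)"
    by (intro sum.cong refl) (simp add: sum_weight_dchebyshev_coeff)
  also have "\<dots> = real (k choose d)"
    by simp
  finally show ?thesis
    using assms by (auto simp: binomial_eq_0)
qed

lemma sum_weight_dchebyshev:
  assumes "k \<le> d"
  shows "(\<Sum>n\<le>d. dchebyshev_weight d n * dchebyshev d n k) = (if k = 0 then 1 else 0)"
proof -
  have "(\<Sum>n\<le>d. dchebyshev_weight d n * dchebyshev d n k)
      = (\<Sum>n\<le>d. (-1) ^ n * dchebyshev_weight d n * dchebyshev d n (d - k))"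
    using assms by (intro sum.cong refl) (simp add: dchebyshev_reflect flip: power_add)
  also have "\<dots> = (if k = 0 then 1 else 0)"
    using assms by (auto simp: sum_alternating_weight_dchebyshev)
  finally show ?thesis .
qed

section \<open>The Clebsch--Gordan coefficient\<close>

lemma hf_double: "hf (2 * x) = fact (nat x)"
  by (simp add: hf_def)

lemma hf_double_diff: "hf (2 * x - 2 * y) = fact (nat (x - y))"
  using hf_double[of "x - y"] by (simp add: algebra_simps)

lemma hf_double_add: "hf (2 * x + 2 * y + 2) = fact (nat (x + y + 1))"
  using hf_double[of "x + y + 1"] by (simp add: algebra_simps)

lemma cg_sq_eq_dchebyshev_weight:
  assumes "\<alpha> < d"
  shows "(cg (int d) (int d) (2 * int \<alpha>) (int d) (- int d) 0)\<^sup>2 = dchebyshev_weight d \<alpha>"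
proof -
  define A where "A = (fact \<alpha> :: real)"
  define B where "B = (fact (d - \<alpha>) :: real)"
  define D where "D = (fact d :: real)"
  define F where "F = (fact (d + \<alpha> + 1) :: real)"
  have pos: "A > 0" "B > 0" "D > 0" "F > 0"
    unfolding A_def B_def D_def F_def by auto
  have valid: "cg_valid (int d) (int d) (2 * int \<alpha>) (int d) (- int d) 0"
    using assms by (simp add: cg_valid_def)
  have racah_range: "{k::nat. 2 * int k \<le> int d + int d - 2 * int \<alpha> \<and> 2 * int k \<le> int d - int d \<and>
      2 * int k \<le> int d + - int d \<and> 0 \<le> 2 * int \<alpha> - int d + int d + 2 * int k \<and>
      0 \<le> 2 * int \<alpha> - int d - - int d + 2 * int k} = {0}"
    using assms by auto
  have "nat (int d - int \<alpha>) = d - \<alpha>" "nat (int d + int \<alpha> + 1) = d + \<alpha> + 1"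
    using assms by auto
  then have "cg (int d) (int d) (2 * int \<alpha>) (int d) (- int d) 0
      = sqrt ((2 * real \<alpha> + 1) * A * A * B / F) * sqrt (A * A * D * D) / (B * A * A)"
    unfolding cg_def if_P[OF valid] racah_range A_def B_def D_def F_def
    by (simp add: mult_2[symmetric] hf_double hf_double_diff hf_double_add) (simp add: hf_def)
  then have "(cg (int d) (int d) (2 * int \<alpha>) (int d) (- int d) 0)\<^sup>2
      = (2 * real \<alpha> + 1) * A * A * B / F * (A * A * D * D) / (B * A * A)\<^sup>2"
    using pos by (simp add: power_divide power_mult_distrib)
  also have "\<dots> = (2 * real \<alpha> + 1) * D\<^sup>2 / (F * B)"
    using pos by (simp add: field_simps power2_eq_square)
  finally show ?thesis
    unfolding dchebyshev_weight_def D_def F_def B_def .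
qed

section \<open>Projection of the GHZ state\<close>

(* At the two corners the stencil degenerates to multiplication by d(d+1), the Casimir value of
   the top spin d. *)
lemma Lsub_corners_vanish:
  assumes B: "B \<in> Lsub d \<alpha>" and "\<alpha> < d" and corner: "(i, j) = (0, d) \<or> (i, j) = (d, 0)"
  shows "B i j = 0"
proof -
  have "is_op d B" and eigen: "casimir_ad d B i j = of_real (real \<alpha> * (real \<alpha> + 1)) * B i j"
    using B by (auto simp: Lsub_def)
  have "real d * (real d + 2) / 2 - 2 * mval d i * mval d j = real d * (real d + 1)"
    using corner by (auto simp: mval_def field_simps)
  then have "casimir_ad d B i j = of_real (real d * (real d + 1)) * B i j"
    using corner \<open>\<alpha> < d\<close> by (auto simp: casimir_ad_eq_stencil[OF \<open>is_op d B\<close>] casimir_stencil_def)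
  with eigen have "complex_of_real (real d * (real d + 1)) * B i j = of_real (real \<alpha> * (real \<alpha> + 1)) * B i j"
    by (simp only:)
  then have "B i j = 0 \<or> real d * (real d + 1) = real \<alpha> * (real \<alpha> + 1)"
    by (simp only: mult_cancel_right of_real_eq_iff)
  moreover have "real \<alpha> * (real \<alpha> + 1) < real d * (real d + 1)"
    using strict_monoD[OF strict_mono_pronic \<open>\<alpha> < d\<close>] .
  ultimately show ?thesis
    by auto
qed

definition ghz_corners :: "nat \<Rightarrow> op" where
  "ghz_corners d = (\<lambda>i j. if (i, j) = (0, d) \<or> (i, j) = (d, 0) then 1 / 2 else 0)"

definition ghz_diag :: "nat \<Rightarrow> nat \<Rightarrow> real" where
  "ghz_diag d k = (if k = 0 \<or> k = d then 1 / 2 else 0)"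

lemma rho_ghz_eq:
  assumes "1 \<le> d"
  shows "rho_ghz d = (\<lambda>i j. ghz_corners d i j + diag_op d (ghz_diag d) i j)"
proof -
  have "complex_of_real (1 / sqrt 2) * cnj (complex_of_real (1 / sqrt 2)) = 1 / 2"
    by (simp flip: of_real_mult)
  then have "ghz d i * cnj (ghz d j) = (if (i = 0 \<or> i = d) \<and> (j = 0 \<or> j = d) then 1 / 2 else 0)" for i j
    by (simp add: ghz_def)
  with assms show ?thesis
    unfolding rho_ghz_def ghz_corners_def diag_op_def ghz_diag_def by (intro ext) auto
qed

definition ghz_coeff :: "nat \<Rightarrow> nat \<Rightarrow> real" where
  "ghz_coeff d n = (if even n then dchebyshev_weight d n else 0)"

definition ghz_component :: "nat \<Rightarrow> nat \<Rightarrow> op" where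
  "ghz_component d \<alpha> = diag_op d (\<lambda>k. ghz_coeff d \<alpha> * dchebyshev d \<alpha> k)"

lemma ghz_diag_expansion:
  assumes "1 \<le> d" "k \<le> d"
  shows "ghz_diag d k = (\<Sum>n\<le>d. ghz_coeff d n * dchebyshev d n k)"
proof -
  have "(\<Sum>n\<le>d. ghz_coeff d n * dchebyshev d n k)
      = ((\<Sum>n\<le>d. dchebyshev_weight d n * dchebyshev d n k)
        + (\<Sum>n\<le>d. (-1) ^ n * dchebyshev_weight d n * dchebyshev d n k)) / 2"
    unfolding sum.distrib[symmetric] sum_divide_distrib by (intro sum.cong refl) (simp add: ghz_coeff_def)
  also have "\<dots> = ghz_diag d k"
    using assms by (simp add: sum_weight_dchebyshev sum_alternating_weight_dchebyshev ghz_diag_def)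
  finally show ?thesis ..
qed

lemma hs_inner_Lsub_rho_ghz:
  assumes B: "B \<in> Lsub d \<alpha>" and "\<alpha> < d"
  shows "hs_inner d B (rho_ghz d) = hs_inner d B (ghz_component d \<alpha>)"
proof -
  let ?Q = "\<lambda>n. diag_op d (dchebyshev d n)"
  have "B 0 d = 0" "B d 0 = 0"
    using Lsub_corners_vanish[OF B \<open>\<alpha> < d\<close>] by auto
  then have corners: "hs_inner d B (ghz_corners d) = 0"
    unfolding hs_inner_def ghz_corners_def by (auto intro!: sum.neutral)
  have "hs_inner d B (diag_op d (ghz_diag d))
      = (\<Sum>k\<le>d. \<Sum>n\<le>d. of_real (ghz_coeff d n) * (cnj (B k k) * of_real (dchebyshev d n k)))"
    unfolding hs_inner_diag_op_right using \<open>\<alpha> < d\<close>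
    by (intro sum.cong refl) (simp add: ghz_diag_expansion of_real_sum sum_distrib_left mult.left_commute)
  also have "\<dots> = (\<Sum>n\<le>d. of_real (ghz_coeff d n) * hs_inner d B (?Q n))"
    by (subst sum.swap) (simp add: hs_inner_diag_op_right sum_distrib_left)
  also have "\<dots> = of_real (ghz_coeff d \<alpha>) * hs_inner d B (?Q \<alpha>)"
  proof -
    have Q: "?Q n \<in> Lsub d n" if "n \<le> d" for n
      using that by (intro diag_op_in_Lsub) (simp add: diag_casimir_dchebyshev)
    have "hs_inner d B (?Q n) = 0" if "n \<le> d" "n \<noteq> \<alpha>" for n
      using hs_inner_Lsub_orthogonal[OF B Q[OF that(1)]] that(2) by simp
    then show ?thesis
      using \<open>\<alpha> < d\<close> by (subst sum_atMost_single[where c = \<alpha>]) auto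
  qed
  also have "\<dots> = hs_inner d B (ghz_component d \<alpha>)"
    unfolding ghz_component_def hs_inner_diag_op_right by (simp add: sum_distrib_left mult_ac)
  finally show ?thesis
    using \<open>\<alpha> < d\<close> corners by (simp add: rho_ghz_eq hs_inner_add_right)
qed

lemma ghz_component_in_Lsub: "\<alpha> \<le> d \<Longrightarrow> ghz_component d \<alpha> \<in> Lsub d \<alpha>"
  unfolding ghz_component_def by (rule diag_op_in_Lsub) (simp add: diag_casimir_scale diag_casimir_dchebyshev)

lemma hs_inner_ghz_component_rho_ghz:
  assumes "\<alpha> < d"
  shows "hs_inner d (ghz_component d \<alpha>) (rho_ghz d) = of_real (ghz_coeff d \<alpha>)"
proof -
  have "hs_inner d (ghz_component d \<alpha>) (rho_ghz d)
      = of_real (\<Sum>k\<le>d. ghz_coeff d \<alpha> * dchebyshev d \<alpha> k * ghz_diag d k)"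
    unfolding ghz_component_def hs_inner_diag_op_left of_real_sum using assms
    by (intro sum.cong refl) (simp add: rho_ghz_eq ghz_corners_def diag_op_def)
  also have "(\<Sum>k\<le>d. ghz_coeff d \<alpha> * dchebyshev d \<alpha> k * ghz_diag d k)
      = (\<Sum>k\<in>{0, d}. ghz_coeff d \<alpha> * dchebyshev d \<alpha> k / 2)"
    by (intro sum.mono_neutral_cong_right) (auto simp: ghz_diag_def)
  also have "\<dots> = ghz_coeff d \<alpha> * (dchebyshev d \<alpha> 0 + dchebyshev d \<alpha> d) / 2"
    using assms by (simp add: field_simps)
  also have "\<dots> = ghz_coeff d \<alpha>"
    using assms by (simp add: dchebyshev_at_0 dchebyshev_at_top ghz_coeff_def)
  finally show ?thesis .
qed

theorem mainTheorem12:
  fixes d \<alpha> :: nat and Bs :: "op list"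
  assumes "1 \<le> d"
    and "\<alpha> < d"
    and "hs_onb d (Lsub d \<alpha>) Bs"
  shows "gfd_sum d Bs (rho_ghz d) =
           (if even \<alpha> then (cg (int d) (int d) (2 * int \<alpha>) (int d) (- int d) 0)\<^sup>2 else 0)"
proof -
  let ?X = "ghz_component d \<alpha>"
  have X: "?X \<in> Lsub d \<alpha>"
    using assms(2) by (simp add: ghz_component_in_Lsub)
  have "complex_of_real (gfd_sum d Bs (rho_ghz d)) = hs_inner d ?X ?X"
    using assms(2) by (intro gfd_sum_eq_hs_norm[OF assms(3) X]) (rule hs_inner_Lsub_rho_ghz)
  also have "\<dots> = hs_inner d ?X (rho_ghz d)"
    using hs_inner_Lsub_rho_ghz[OF X assms(2)] by simp
  also have "\<dots> = of_real (ghz_coeff d \<alpha>)"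
    using assms(2) by (rule hs_inner_ghz_component_rho_ghz)
  finally show ?thesis
    using assms(2) by (simp add: ghz_coeff_def cg_sq_eq_dchebyshev_weight)
qed

end
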